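(* Let $D=\{z\in\mathbb C^2:\ |z_2|^2+x_1^2+y_1^4<1\}$ with defining function $\rho$, and fix $\zeta\in bD$. Choose coordinates $w=(w_1,w_2)$, $w_j=u_j+iv_j$, obtained from the standard coordinates of $\mathbb C^2$ by a translation and a unitary linear transformation, such that $\zeta=(0,0)$ and $\frac{\partial\rho}{\partial v_2}(\zeta)=|\nabla\rho(\zeta)|$, $\frac{\partial\rho}{\partial u_1}(\zeta)=\frac{\partial\rho}{\partial v_1}(\zeta)=\frac{\partial\rho}{\partial u_2}(\zeta)=0$, so that near $\zeta$ the boundary $bD$ is a graph $v_2=\Phi(u_1,v_1,u_2)$ with $\Phi$ smooth, $\Phi(0,0,0)=0$, $\nabla\Phi(0,0,0)=0$; regard points $w\in bD$ near $\zeta$ as functions of the parameters $(u_1,v_1,u_2)$. Then, for $\delta>0$ sufficiently small, $$\frac{\partial\Delta}{\partial u_2}(w,z)\neq0\quad\text{whenever } w\in bD,\ |w-\zeta|<\delta,\ \text{and } |z-\zeta|<\delta.$$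
   Context: Here $\rho(w)=|w_2|^2+u_1^2+v_1^4-1$ in the original coordinates, and $\Delta(w,z)=\langle\partial\rho(w),w-z\rangle=\sum_{j=1}^2\frac{\partial\rho}{\partial w_j}(w)(w_j-z_j)$; the derivative $\partial/\partial u_2$ is taken with respect to the graph parameter $u_2$ of $w\in bD$, with $z$ fixed. *)

theory Defs
  imports "HOL-Analysis.Analysis"
begin

text \<open>Points of C^2 are pairs (z1, z2); the norm on complex \<times> complex is the Euclidean one.\<close>

definition rho :: "complex \<times> complex \<Rightarrow> real" where
  "rho z = (cmod (snd z))^2 + (Re (fst z))^2 + (Im (fst z))^4 - 1"

definition Dom :: "(complex \<times> complex) set" where
  "Dom = {z. rho z < 0}"

text \<open>Delta(w,z) = sum_j (d rho / d w_j)(w) (w_j - z_j), with the Wirtinger derivatives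
  d rho/d w1 = u1 - 2 i v1^3 and d rho / d w2 = conj w2 computed in the original coordinates.\<close>
definition Delta :: "complex \<times> complex \<Rightarrow> complex \<times> complex \<Rightarrow> complex" where
  "Delta w z = (complex_of_real (Re (fst w)) - 2 * \<i> * complex_of_real ((Im (fst w))^3)) * (fst w - fst z)
              + cnj (snd w) * (snd w - snd z)"

definition unitary2 :: "complex \<Rightarrow> complex \<Rightarrow> complex \<Rightarrow> complex \<Rightarrow> bool" where
  "unitary2 a b c d \<longleftrightarrow>
     cnj a * a + cnj c * c = 1 \<and> cnj b * b + cnj d * d = 1 \<and> cnj a * b + cnj c * d = 0"

text \<open>New coordinates w = U (z - zeta) with U = [[a,b],[c,d]] unitary; this is the inverse map,
  sending new coordinates w to the original point zeta + U^* w.\<close>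
definition Tinv :: "complex \<times> complex \<Rightarrow> complex \<Rightarrow> complex \<Rightarrow> complex \<Rightarrow> complex
                      \<Rightarrow> complex \<times> complex \<Rightarrow> complex \<times> complex" where
  "Tinv \<zeta> a b c d w =
     (fst \<zeta> + cnj a * fst w + cnj c * snd w, snd \<zeta> + cnj b * fst w + cnj d * snd w)"

definition graph_pt :: "complex \<times> complex \<Rightarrow> complex \<Rightarrow> complex \<Rightarrow> complex \<Rightarrow> complex
                      \<Rightarrow> (real \<times> real \<times> real \<Rightarrow> real) \<Rightarrow> real \<times> real \<times> real \<Rightarrow> complex \<times> complex" where
  "graph_pt \<zeta> a b c d \<Phi> p =
     (case p of (u1, v1, u2) \<Rightarrow> Tinv \<zeta> a b c d (Complex u1 v1, Complex u2 (\<Phi> p)))"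

fun Ck_on :: "nat \<Rightarrow> ('a::real_normed_vector \<Rightarrow> real) \<Rightarrow> 'a set \<Rightarrow> bool" where
  "Ck_on 0 f N = continuous_on N f"
| "Ck_on (Suc k) f N =
     (\<exists>f'. (\<forall>p\<in>N. (f has_derivative f' p) (at p)) \<and> (\<forall>h. Ck_on k (\<lambda>p. f' p h) N))"

definition smooth_on :: "('a::real_normed_vector \<Rightarrow> real) \<Rightarrow> 'a set \<Rightarrow> bool" where
  "smooth_on f N \<longleftrightarrow> (\<forall>k. Ck_on k f N)"

end

theory Submission
  imports Defs
begin

text \<open>At w = z = zeta the u2-derivative of Delta along bD equals the complex partial
  d rho/d w2 = (rho_u2 - i rho_v2)/2 in the new coordinates.  As rho_u2(zeta) = 0 and rho has no
  critical point on bD, this is nonzero.  The u2-derivative depends continuously on the graph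
  parameters (through d Phi/d u2) and on z, so it stays nonzero nearby, and since the unitary
  change of coordinates is an isometry, closeness of w to zeta controls the parameters.\<close>

definition rho_differential :: "complex \<times> complex \<Rightarrow> complex \<times> complex \<Rightarrow> real" where
  "rho_differential q h =
     2 * Re (fst q) * Re (fst h) + 4 * Im (fst q)^3 * Im (fst h)
     + 2 * Re (snd q) * Re (snd h) + 2 * Im (snd q) * Im (snd h)"

definition adjoint2 ::
    "complex \<Rightarrow> complex \<Rightarrow> complex \<Rightarrow> complex \<Rightarrow> complex \<times> complex \<Rightarrow> complex \<times> complex" where
  "adjoint2 a b c d k = (cnj a * fst k + cnj c * snd k, cnj b * fst k + cnj d * snd k)"

definition Delta_differential ::
    "complex \<times> complex \<Rightarrow> complex \<times> complex \<Rightarrow> complex \<times> complex \<Rightarrow> complex" where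
  "Delta_differential w z v =
     (complex_of_real (Re (fst v)) - 2 * \<i> * complex_of_real (3 * (Im (fst w))^2 * Im (fst v)))
       * (fst w - fst z)
     + (complex_of_real (Re (fst w)) - 2 * \<i> * complex_of_real ((Im (fst w))^3)) * fst v
     + cnj (snd v) * (snd w - snd z) + cnj (snd w) * snd v"

lemma has_derivative_rho: "(rho has_derivative rho_differential q) (at q)"
proof -
  have rho_eq: "rho = (\<lambda>q. (Re (snd q))^2 + (Im (snd q))^2 + (Re (fst q))^2 + (Im (fst q))^4 - 1)"
    by (simp add: fun_eq_iff rho_def cmod_power2)
  show ?thesis
    unfolding rho_eq
    by (rule derivative_eq_intros refl)+ (simp add: fun_eq_iff rho_differential_def)
qed

lemma open_Dom: "open Dom"
  unfolding Dom_def rho_def by (intro open_Collect_less continuous_intros)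

lemma rho_differential_nonzero_on_frontier:
  assumes "q \<in> frontier Dom"
  shows "rho_differential q \<noteq> (\<lambda>h. 0)"
proof
  assume "rho_differential q = (\<lambda>h. 0)"
  then have "rho_differential q (1, 0) = 0" "rho_differential q (\<i>, 0) = 0"
    "rho_differential q (0, 1) = 0" "rho_differential q (0, \<i>) = 0"
    by simp_all
  then have "Re (fst q) = 0" "Im (fst q) = 0" "Re (snd q) = 0" "Im (snd q) = 0"
    by (simp_all add: rho_differential_def)
  then have "q \<in> Dom" by (simp add: Dom_def rho_def cmod_power2)
  with assms open_Dom show False by (simp add: frontier_def interior_open)
qed

lemma Tinv_eq: "Tinv \<zeta> a b c d w = \<zeta> + adjoint2 a b c d w"
  by (simp add: Tinv_def adjoint2_def prod_eq_iff)

lemma has_derivative_adjoint2: "(adjoint2 a b c d has_derivative adjoint2 a b c d) (at w)"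
  unfolding adjoint2_def by (auto intro!: derivative_eq_intros simp: fun_eq_iff algebra_simps)

lemma unitary2_columns:
  assumes "unitary2 a b c d"
  shows "cnj a * a + cnj c * c = 1" "cnj b * b + cnj d * d = 1"
    "cnj a * b + cnj c * d = 0" "cnj b * a + cnj d * c = 0"
  using assms unfolding unitary2_def by (auto dest: arg_cong[of _ 0 cnj] simp: mult.commute)

text \<open>U^* U = I forces U U^* = I, by a determinant argument valid in any commutative ring.\<close>
lemma unitary2_rows:
  assumes "unitary2 a b c d"
  shows "a * cnj a + b * cnj b = 1" "c * cnj c + d * cnj d = 1"
    "a * cnj c + b * cnj d = 0" "cnj a * c + cnj b * d = 0"
  using unitary2_columns[OF assms]
  by algebra+

lemma adjoint2_surj:
  assumes "unitary2 a b c d"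
  shows "adjoint2 a b c d (a * fst k + b * snd k, c * fst k + d * snd k) = k"
  using unitary2_columns[OF assms]
  unfolding adjoint2_def prod_eq_iff fst_conv snd_conv by algebra

lemma norm_Pair_square_complex:
  "complex_of_real ((norm (x, y))^2) = x * cnj x + y * cnj y"
proof -
  have "(norm (x, y))^2 = (cmod x)^2 + (cmod y)^2"
    by (simp add: norm_Pair)
  then show ?thesis
    by (simp only: of_real_add complex_norm_square)
qed

lemma norm_adjoint2:
  assumes "unitary2 a b c d"
  shows "norm (adjoint2 a b c d k) = norm k"
proof -
  obtain k1 k2 where k: "k = (k1, k2)"
    by fastforce
  have "complex_of_real ((norm (adjoint2 a b c d k))^2) = complex_of_real ((norm k)^2)"
    using unitary2_rows[OF assms]
    unfolding k adjoint2_def fst_conv snd_conv norm_Pair_square_complex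
      complex_cnj_add complex_cnj_mult complex_cnj_cnj
    by algebra
  then show ?thesis
    by (metis norm_ge_zero of_real_eq_iff power2_eq_iff_nonneg)
qed

lemma has_vector_derivative_Delta:
  assumes "(g has_vector_derivative v) (at t)"
  shows "((\<lambda>t. Delta (g t) z) has_vector_derivative Delta_differential (g t) z v) (at t)"
proof -
  have components: "((\<lambda>t. fst (g t)) has_vector_derivative fst v) (at t)"
    "((\<lambda>t. snd (g t)) has_vector_derivative snd v) (at t)"
    using assms by (auto simp: has_vector_derivative_def intro!: derivative_eq_intros)
  show ?thesis
    unfolding Delta_def
    apply (rule derivative_eq_intros refl components)+
    by (simp add: Delta_differential_def algebra_simps)
qed

lemma isCont_Delta_differential:
  assumes "isCont w x" "isCont z x" "isCont v x"
  shows "isCont (\<lambda>x. Delta_differential (w x) (z x) (v x)) x"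
  unfolding Delta_differential_def by (intro continuous_intros continuous_Re continuous_Im assms)

lemma Delta_differential_diagonal:
  "Delta_differential w w v =
     (complex_of_real (rho_differential w v)
      - \<i> * complex_of_real (rho_differential w (\<i> * fst v, \<i> * snd v))) / 2"
  by (simp add: Delta_differential_def rho_differential_def complex_eq_iff algebra_simps)

lemma linear_eq_0_if_Basis_values_0:
  fixes f :: "complex \<times> complex \<Rightarrow> real"
  assumes "linear f" "f (1, 0) = 0" "f (\<i>, 0) = 0" "f (0, 1) = 0" "f (0, \<i>) = 0"
  shows "f = (\<lambda>h. 0)"
  by (rule linear_eq_stdbasis)
    (use assms in \<open>auto simp: linear_zero Basis_prod_def Basis_complex_def\<close>)

lemma has_derivative_rho_Tinv:
  "((\<lambda>w. rho (Tinv \<zeta> a b c d w)) has_derivative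
     (\<lambda>h. rho_differential (Tinv \<zeta> a b c d w) (adjoint2 a b c d h))) (at w)"
proof -
  have "(Tinv \<zeta> a b c d has_derivative adjoint2 a b c d) (at w)"
    using has_derivative_add[OF has_derivative_const has_derivative_adjoint2, of \<zeta>]
    by (simp add: Tinv_eq[abs_def])
  from has_derivative_compose[OF this has_derivative_rho] show ?thesis .
qed

lemma rho_Tinv_derivative_nonzero:
  assumes "\<zeta> \<in> frontier Dom" "unitary2 a b c d"
    and "((\<lambda>w. rho (Tinv \<zeta> a b c d w)) has_derivative Dr) (at (0, 0))"
  shows "Dr \<noteq> (\<lambda>h. 0)"
proof
  assume "Dr = (\<lambda>h. 0)"
  moreover have "Dr = (\<lambda>h. rho_differential \<zeta> (adjoint2 a b c d h))"
    using has_derivative_unique[OF assms(3) has_derivative_rho_Tinv] by (simp add: Tinv_def)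
  ultimately have "rho_differential \<zeta> (adjoint2 a b c d h) = 0" for h
    by metis
  then have "rho_differential \<zeta> = (\<lambda>h. 0)"
    using adjoint2_surj[OF assms(2)] by metis
  with rho_differential_nonzero_on_frontier[OF assms(1)] show False ..
qed

lemma graph_pt_eq:
  "graph_pt \<zeta> a b c d \<Phi> p =
     \<zeta> + adjoint2 a b c d (Complex (fst p) (fst (snd p)), Complex (snd (snd p)) (\<Phi> p))"
  by (cases p) (simp add: graph_pt_def Tinv_eq)

lemma isCont_graph_pt: "isCont \<Phi> p \<Longrightarrow> isCont (graph_pt \<zeta> a b c d \<Phi>) p"
  unfolding graph_pt_eq[abs_def] adjoint2_def Complex_eq by (intro continuous_intros)

lemma norm_le_dist_graph_pt:
  assumes "unitary2 a b c d"
  shows "norm p \<le> dist (graph_pt \<zeta> a b c d \<Phi> p) \<zeta>"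
proof -
  obtain u1 v1 u2 where p: "p = (u1, v1, u2)"
    by (cases p) auto
  have "norm p \<le> norm (Complex u1 v1, Complex u2 (\<Phi> p))"
    by (simp add: p norm_Pair complex_norm)
  also have "\<dots> = dist (graph_pt \<zeta> a b c d \<Phi> p) \<zeta>"
    by (simp add: graph_pt_eq dist_norm norm_adjoint2[OF assms] p)
  finally show ?thesis .
qed

lemma has_field_derivative_third_arg:
  fixes f :: "real \<times> real \<times> real \<Rightarrow> real"
  assumes "(f has_derivative f') (at (x, y, t))"
  shows "((\<lambda>s. f (x, y, s)) has_field_derivative f' (0, 0, 1)) (at t)"
proof -
  have "((\<lambda>s. (x, y, s)) has_derivative (\<lambda>s. (0, 0, s))) (at t)"
    by (rule derivative_eq_intros refl)+
  from has_derivative_compose[OF this assms]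
  have "((\<lambda>s. f (x, y, s)) has_derivative (\<lambda>s. f' (0, 0, s))) (at t)" .
  moreover have "(\<lambda>s. f' (0, 0, s)) = (*) (f' (0, 0, 1))"
  proof
    fix s :: real
    show "f' (0, 0, s) = f' (0, 0, 1) * s"
      using linear_scale[OF has_derivative_linear[OF assms], of s "(0, 0, 1)"] by (simp add: mult.commute)
  qed
  ultimately show ?thesis
    by (simp add: has_field_derivative_def)
qed

lemma has_vector_derivative_graph_pt:
  assumes "((\<lambda>s. \<Phi> (u1, v1, s)) has_field_derivative D) (at t)"
  shows "((\<lambda>s. graph_pt \<zeta> a b c d \<Phi> (u1, v1, s)) has_vector_derivative
           adjoint2 a b c d (0, Complex 1 D)) (at t)"
  unfolding graph_pt_eq adjoint2_def Complex_eq fst_conv snd_conv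
  by (rule derivative_eq_intros assms refl)+ (simp add: prod_eq_iff)

lemma smooth_on_imp_C1:
  assumes "smooth_on f N"
  obtains f' where "\<forall>p\<in>N. (f has_derivative f' p) (at p)"
    "\<forall>h. continuous_on N (\<lambda>p. f' p h)"
  using assms unfolding smooth_on_def by (metis Ck_on.simps)

text \<open>In new coordinates the u2-tangent of the graph is (0, 1 + i Phi_u2), where
  Phi_u2 = Phi' p (0, 0, 1) for the differential Phi' of Phi.\<close>
definition Delta_u2_derivative ::
    "complex \<times> complex \<Rightarrow> complex \<Rightarrow> complex \<Rightarrow> complex \<Rightarrow> complex
     \<Rightarrow> (real \<times> real \<times> real \<Rightarrow> real) \<Rightarrow> (real \<times> real \<times> real \<Rightarrow> real \<times> real \<times> real \<Rightarrow> real)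
     \<Rightarrow> real \<times> real \<times> real \<Rightarrow> complex \<times> complex \<Rightarrow> complex"
  where
  "Delta_u2_derivative \<zeta> a b c d \<Phi> \<Phi>' p z =
     Delta_differential (graph_pt \<zeta> a b c d \<Phi> p) z
       (adjoint2 a b c d (0, Complex 1 (\<Phi>' p (0, 0, 1))))"

lemma has_vector_derivative_Delta_graph:
  assumes "(\<Phi> has_derivative \<Phi>' (u1, v1, u2)) (at (u1, v1, u2))"
  shows "((\<lambda>t. Delta (graph_pt \<zeta> a b c d \<Phi> (u1, v1, t)) z) has_vector_derivative
           Delta_u2_derivative \<zeta> a b c d \<Phi> \<Phi>' (u1, v1, u2) z) (at u2)"
  unfolding Delta_u2_derivative_def
  by (rule has_vector_derivative_Delta[OF has_vector_derivative_graph_pt[OF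
        has_field_derivative_third_arg[OF assms]]])

lemma isCont_Delta_u2_derivative:
  assumes "isCont \<Phi> p" "isCont (\<lambda>p. \<Phi>' p (0, 0, 1)) p"
  shows "isCont (\<lambda>x. Delta_u2_derivative \<zeta> a b c d \<Phi> \<Phi>' (fst x) (snd x)) (p, z)"
proof -
  have graph: "isCont (\<lambda>x. graph_pt \<zeta> a b c d \<Phi> (fst x)) (p, z)"
    using isCont_graph_pt[OF assms(1)]
    by (intro continuous_at_compose[unfolded o_def, OF continuous_fst]) simp_all
  have slope: "isCont (\<lambda>x. \<Phi>' (fst x) (0, 0, 1)) (p, z)"
    using assms(2) by (intro continuous_at_compose[unfolded o_def, OF continuous_fst]) simp_all
  show ?thesis
    unfolding Delta_u2_derivative_def adjoint2_def Complex_eq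
    by (intro isCont_Delta_differential continuous_intros graph slope)
qed

lemma Delta_u2_derivative_at_center:
  assumes "\<zeta> \<in> frontier Dom" "unitary2 a b c d"
    and Dr: "((\<lambda>w. rho (Tinv \<zeta> a b c d w)) has_derivative Dr) (at (0, 0))"
    and "Dr (1, 0) = 0" "Dr (\<i>, 0) = 0" "Dr (0, 1) = 0"
    and "\<Phi> (0, 0, 0) = 0" "\<Phi>' (0, 0, 0) = (\<lambda>h. 0)"
  shows "Delta_u2_derivative \<zeta> a b c d \<Phi> \<Phi>' (0, 0, 0) \<zeta> \<noteq> 0"
proof -
  have "Dr = (\<lambda>h. rho_differential \<zeta> (adjoint2 a b c d h))"
    using has_derivative_unique[OF Dr has_derivative_rho_Tinv] by (simp add: Tinv_def)
  moreover have "graph_pt \<zeta> a b c d \<Phi> (0, 0, 0) = \<zeta>"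
    using assms(7) by (simp add: graph_pt_eq adjoint2_def Complex_eq zero_prod_def)
  ultimately have "Delta_u2_derivative \<zeta> a b c d \<Phi> \<Phi>' (0, 0, 0) \<zeta>
      = (complex_of_real (Dr (0, 1)) - \<i> * complex_of_real (Dr (0, \<i>))) / 2"
    using assms(8)
    by (simp add: Delta_u2_derivative_def Delta_differential_diagonal adjoint2_def
        Complex_eq mult.commute)
  moreover have "Dr (0, \<i>) \<noteq> 0"
    using rho_Tinv_derivative_nonzero[OF assms(1-3)] linear_eq_0_if_Basis_values_0[of Dr]
      has_derivative_linear[OF Dr] assms(4-6) by blast
  ultimately show ?thesis
    using assms(6) by (simp add: complex_eq_iff)
qed

lemma isCont_nonzero_near_Pair:
  fixes F :: "'a::metric_space \<times> 'b::metric_space \<Rightarrow> 'c::t2_space"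
  assumes "isCont F (p, z)" "F (p, z) \<noteq> c"
  obtains e where "e > 0" "\<And>q y. dist q p < e \<Longrightarrow> dist y z < e \<Longrightarrow> F (q, y) \<noteq> c"
proof -
  obtain e where "e > 0" and e: "\<And>x. dist (p, z) x < e \<Longrightarrow> F x \<noteq> c"
    using continuous_at_avoid[OF assms] by metis
  have "F (q, y) \<noteq> c" if "dist q p < e / 2" "dist y z < e / 2" for q y
  proof (rule e)
    have "dist (p, z) (q, y) \<le> dist p q + dist z y"
      unfolding dist_Pair_Pair by (rule sqrt_sum_squares_le_sum) simp_all
    with that show "dist (p, z) (q, y) < e"
      by (simp add: dist_commute)
  qed
  with \<open>e > 0\<close> show ?thesis
    by (intro that[of "e / 2"]) auto
qed

theorem lemma2p2:
  fixes \<zeta> :: "complex \<times> complex" and a b c d :: complex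
    and Dr :: "complex \<times> complex \<Rightarrow> real"
    and \<Phi> :: "real \<times> real \<times> real \<Rightarrow> real" and N :: "(real \<times> real \<times> real) set"
  assumes zeta: "\<zeta> \<in> frontier Dom"
    and U: "unitary2 a b c d"
    and Dr: "((\<lambda>w. rho (Tinv \<zeta> a b c d w)) has_derivative Dr) (at (0, 0))"
    and du1: "Dr (1, 0) = 0" and dv1: "Dr (\<i>, 0) = 0" and du2: "Dr (0, 1) = 0"
    and dv2: "Dr (0, \<i>) = sqrt ((Dr (1, 0))^2 + (Dr (\<i>, 0))^2 + (Dr (0, 1))^2 + (Dr (0, \<i>))^2)"
    and N: "open N" "(0, 0, 0) \<in> N"
    and smooth: "smooth_on \<Phi> N"
    and Phi0: "\<Phi> (0, 0, 0) = 0"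
    and gradPhi0: "(\<Phi> has_derivative (\<lambda>h. 0)) (at (0, 0, 0))"
    and graph1: "\<forall>p\<in>N. graph_pt \<zeta> a b c d \<Phi> p \<in> frontier Dom"
    and graph2: "\<exists>\<epsilon>>0. \<forall>w\<in>frontier Dom. dist w \<zeta> < \<epsilon> \<longrightarrow> (\<exists>p\<in>N. w = graph_pt \<zeta> a b c d \<Phi> p)"
  shows "\<exists>\<delta>>0. \<forall>u1 v1 u2 z. (u1, v1, u2) \<in> N \<and> dist (graph_pt \<zeta> a b c d \<Phi> (u1, v1, u2)) \<zeta> < \<delta>
            \<and> dist z \<zeta> < \<delta> \<longrightarrow>
            (\<exists>D. ((\<lambda>t. Delta (graph_pt \<zeta> a b c d \<Phi> (u1, v1, t)) z) has_vector_derivative D) (at u2)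
                 \<and> D \<noteq> 0)"
proof -
  obtain \<Phi>' where \<Phi>': "\<forall>p\<in>N. (\<Phi> has_derivative \<Phi>' p) (at p)"
    "\<forall>h. continuous_on N (\<lambda>p. \<Phi>' p h)"
    using smooth_on_imp_C1[OF smooth] by blast
  let ?F = "\<lambda>x. Delta_u2_derivative \<zeta> a b c d \<Phi> \<Phi>' (fst x) (snd x)"
  have flat: "\<Phi>' (0, 0, 0) = (\<lambda>h. 0)"
    using has_derivative_unique[OF _ gradPhi0] \<Phi>'(1) N(2) by blast
  have "isCont ?F ((0, 0, 0), \<zeta>)"
    using isCont_Delta_u2_derivative has_derivative_continuous[OF gradPhi0]
      \<Phi>'(2) N continuous_on_eq_continuous_at by blast
  moreover have "?F ((0, 0, 0), \<zeta>) \<noteq> 0"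
    using Delta_u2_derivative_at_center[where \<Phi> = \<Phi> and \<Phi>' = \<Phi>',
        OF zeta U Dr du1 dv1 du2 Phi0 flat]
    by simp
  ultimately obtain e where "e > 0"
    and e: "\<And>(p :: real \<times> real \<times> real) z.
      dist p (0, 0, 0) < e \<Longrightarrow> dist z \<zeta> < e \<Longrightarrow> ?F (p, z) \<noteq> 0"
    by (rule isCont_nonzero_near_Pair[where F = ?F]) simp_all
  have close: "dist p (0, 0, 0) < e" if "dist (graph_pt \<zeta> a b c d \<Phi> p) \<zeta> < e" for p
    using norm_le_dist_graph_pt[OF U, of p \<zeta> \<Phi>] that dist_0_norm[of p]
    by (simp add: zero_prod_def dist_commute)
  show ?thesis
  proof (intro exI[of _ e] conjI allI impI)
    fix u1 v1 u2 z
    assume near: "(u1, v1, u2) \<in> N \<and> dist (graph_pt \<zeta> a b c d \<Phi> (u1, v1, u2)) \<zeta> < e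
      \<and> dist z \<zeta> < e"
    then have "((\<lambda>t. Delta (graph_pt \<zeta> a b c d \<Phi> (u1, v1, t)) z) has_vector_derivative
        Delta_u2_derivative \<zeta> a b c d \<Phi> \<Phi>' (u1, v1, u2) z) (at u2)"
      using \<Phi>'(1) by (intro has_vector_derivative_Delta_graph) blast
    moreover have "Delta_u2_derivative \<zeta> a b c d \<Phi> \<Phi>' (u1, v1, u2) z \<noteq> 0"
      using e[of "(u1, v1, u2)" z] close near by simp
    ultimately show "\<exists>D. ((\<lambda>t. Delta (graph_pt \<zeta> a b c d \<Phi> (u1, v1, t)) z)
        has_vector_derivative D) (at u2) \<and> D \<noteq> 0"
      by blast
  qed fact
qed

end
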